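(* Let $h_2,h_4,h_5$ and $\psi_2,\psi_4,\psi_5$ be as in the context. Then: (i)(a) $h_2(x)\ge h_5(x)\ge h_4(x)$ for all $x\ge0$; (i)(b) $h_2^{-1}(y)\le h_5^{-1}(y)\le h_4^{-1}(y)$ for all $y\ge 0$. (ii)(a) $h_2(x)\ge (x/2)\log(1+x)\ge (x/2)\log(1+x/2)$ for all $x\ge0$; (ii)(b) $h_4(x)\ge (x/2)\log(1+x/2)$ for all $x\ge0$; (ii)(c) $h_5(x)\ge (x/2)\log(1+x/2)$ for all $x\ge 0$. (iii)(a) $h_2(x)\sim x^2/2$ as $x\searrow0$ and $h_2(x)\sim x\log x$ as $x\to\infty$; (iii)(b) $h_4(x)\sim x^2/4$ as $x\searrow0$ and $h_4(x)\sim \frac12 x\log x$ as $x\to\infty$; (iii)(c) $h_5(x)\sim x^2/4$ as $x\searrow 0$ and $h_5(x)\sim x\log x$ as $x\to\infty$; (iii)(d) $h_2(x)-h_4(x)\sim x^2/4$ as $x\searrow0$ and $h_2(x)-h_4(x)\sim\frac12x\log x$ as $x\to\infty$; (iii)(e) $h_2(x)-h_5(x)\sim x^2/4$ as $x\searrow 0$ and $h_2(x)-h_5(x)\sim\log x$ as $x\to\infty$. (iv)(a) For $x>0$, $\psi_2(x)\ge x^{-1}\log(1+x)$ and $\psi_2(x)\ge (1+x/3)^{-1}$. (iv)(b) For $x>0$, $\psi_4(x)\ge 2x^{-1}\log(1+x/2)$ and $\psi_4(x)\ge \frac{1/2}{1+x/2}$; moreover for every $\delta\in(0,1/2)$, $\psi_4(x)\ge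 \frac{1-\delta}{1+x/2}$ whenever $0<x\le 2\delta^{1/2}/(1/2-\delta)^{1/2}$. (iv)(c) For $x>0$, $\psi_5(x)\ge 2x^{-1}\log(1+x/2)$ and $\psi_5(x)\ge \frac{1}{1+x/2}$.
   Context: For $x\ge0$: $h_2(x)=(1+x)\log(1+x)-x$ (Bennett); $h_4(x)=(x/2)\,\mathrm{arcsinh}(x/2)=(x/2)\log\big(x/2+\sqrt{1+(x/2)^2}\big)$ (Prokhorov); $h_5(x)=x\,\mathrm{arcsinh}(x/2)-2\big(\cosh(\mathrm{arcsinh}(x/2))-1\big)$ (Kruglov). Each is an increasing bijection of $[0,\infty)$ onto itself, with inverses $h_2^{-1},h_4^{-1},h_5^{-1}$. For $x>0$ define $\psi_2,\psi_4,\psi_5$ by $h_2(x)=\frac{x^2}{2}\psi_2(x)$, $h_4(x)=\frac{x^2}{4}\psi_4(x)$, $h_5(x)=\frac{x^2}{4}\psi_5(x)$. Here $f\sim g$ means $f/g\to1$. *)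

theory Defs
  imports "HOL-Analysis.Analysis" "HOL-Library.Landau_Symbols"
begin

definition h2 :: "real \<Rightarrow> real" where
  "h2 x = (1 + x) * ln (1 + x) - x"

definition h4 :: "real \<Rightarrow> real" where
  "h4 x = (x / 2) * arsinh (x / 2)"

definition h5 :: "real \<Rightarrow> real" where
  "h5 x = x * arsinh (x / 2) - 2 * (cosh (arsinh (x / 2)) - 1)"

text \<open>Inverses of the increasing bijections of [0,inf) onto itself.\<close>
definition h2inv :: "real \<Rightarrow> real" where "h2inv = the_inv_into {0..} h2"
definition h4inv :: "real \<Rightarrow> real" where "h4inv = the_inv_into {0..} h4"
definition h5inv :: "real \<Rightarrow> real" where "h5inv = the_inv_into {0..} h5"

text \<open>psi functions, defined for x > 0 by h2 x = x^2/2 psi2 x, h4 x = x^2/4 psi4 x, h5 x = x^2/4 psi5 x.\<close>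
definition psi2 :: "real \<Rightarrow> real" where "psi2 x = 2 * h2 x / x^2"
definition psi4 :: "real \<Rightarrow> real" where "psi4 x = 4 * h4 x / x^2"
definition psi5 :: "real \<Rightarrow> real" where "psi5 x = 4 * h5 x / x^2"

end

theory Submission
  imports Defs "HOL-Real_Asymp.Real_Asymp"
begin

text \<open>All three functions vanish at 0 and have simple derivatives:
  \<open>h2' x = ln (1 + x)\<close>, \<open>h5' x = arsinh (x/2)\<close> and
  \<open>h4' x = arsinh (x/2) / 2 + x / (4 sqrt (1 + x\<^sup>2/4))\<close>.
  The pointwise comparisons (i)(a) and (ii) therefore reduce to elementary inequalities between
  these derivatives, via \<open>x/2 + sqrt (1 + x\<^sup>2/4) \<le> 1 + x\<close>, \<open>t \<le> arsinh t * sqrt (1 + t\<^sup>2)\<close>,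
  \<open>ln (1 + t) \<le> arsinh t\<close> and \<open>2t/(2 + t) \<le> ln (1 + t)\<close>. Since the functions are increasing
  bijections of \<open>[0, \<infinity>)\<close>, the order of the inverses is reversed. The bounds on the \<open>\<psi>\<close>'s
  are the lower bounds of (ii) together with \<open>h2 x \<ge> 3x\<^sup>2/(6 + 2x)\<close> and
  \<open>h4 x \<ge> x\<^sup>2/(4 + 2x)\<close>, divided by \<open>x\<^sup>2\<close>; the asymptotic equivalences are routine expansions.\<close>

lemma DERIV_le_imp_le:
  fixes f g f' g' :: "real \<Rightarrow> real"
  assumes "a \<le> b"
    and f: "\<And>t. a \<le> t \<Longrightarrow> t \<le> b \<Longrightarrow> (f has_real_derivative f' t) (at t)"
    and g: "\<And>t. a \<le> t \<Longrightarrow> t \<le> b \<Longrightarrow> (g has_real_derivative g' t) (at t)"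
    and le: "\<And>t. a < t \<Longrightarrow> t < b \<Longrightarrow> g' t \<le> f' t"
    and "g a \<le> f a"
  shows "g b \<le> f b"
proof -
  have deriv: "((\<lambda>t. f t - g t) has_real_derivative f' t - g' t) (at t)"
    if "a \<le> t" "t \<le> b" for t
    using f[OF that] g[OF that] by (rule DERIV_diff)
  have "f a - g a \<le> f b - g b"
  proof (rule DERIV_nonneg_imp_increasing_open[of a b "\<lambda>t. f t - g t"])
    show "\<exists>y. ((\<lambda>t. f t - g t) has_real_derivative y) (at t) \<and> 0 \<le> y" if "a < t" "t < b" for t
      using deriv[of t] le[of t] that by auto
    show "continuous_on {a..b} (\<lambda>t. f t - g t)"
      using deriv by (blast intro: DERIV_atLeastAtMost_imp_continuous_on)
  qed fact
  with \<open>g a \<le> f a\<close> show ?thesis by simp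
qed

lemma DERIV_pos_imp_strict_mono_on_atLeast:
  fixes f f' :: "real \<Rightarrow> real"
  assumes deriv: "\<And>t. a \<le> t \<Longrightarrow> (f has_real_derivative f' t) (at t)"
    and pos: "\<And>t. a < t \<Longrightarrow> 0 < f' t"
  shows "strict_mono_on {a..} f"
proof (rule strict_mono_onI)
  fix x y assume "x \<in> {a..}" "y \<in> {a..}" "x < y"
  then have "a \<le> x" by simp
  show "f x < f y"
  proof (rule DERIV_pos_imp_increasing_open[OF \<open>x < y\<close>])
    show "\<exists>d. (f has_real_derivative d) (at t) \<and> 0 < d" if "x < t" "t < y" for t
      using deriv[of t] pos[of t] that \<open>a \<le> x\<close> by auto
    show "continuous_on {x..y} f"
      using deriv \<open>a \<le> x\<close> by (intro DERIV_atLeastAtMost_imp_continuous_on) (meson order_trans)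
  qed
qed

lemma image_atLeast_eq_atLeast:
  fixes f :: "real \<Rightarrow> real"
  assumes mono: "mono_on {a..} f" and cont: "continuous_on {a..} f"
    and lim: "filterlim f at_top at_top"
  shows "f ` {a..} = {f a..}"
proof
  show "f ` {a..} \<subseteq> {f a..}"
    using mono by (auto simp: mono_on_def)
  show "{f a..} \<subseteq> f ` {a..}"
  proof
    fix y assume y: "y \<in> {f a..}"
    have "eventually (\<lambda>x. a \<le> x \<and> y \<le> f x) at_top"
      using lim by (intro eventually_conj eventually_ge_at_top) (simp add: filterlim_at_top)
    then obtain X where X: "a \<le> X" "y \<le> f X"
      by (auto simp: eventually_at_top_linorder)
    then have "\<exists>x. a \<le> x \<and> x \<le> X \<and> f x = y"
      using y by (intro IVT' continuous_on_subset[OF cont]) auto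
    then show "y \<in> f ` {a..}" by auto
  qed
qed

lemma the_inv_into_le_the_inv_into:
  fixes f g :: "'a::linorder \<Rightarrow> 'b::linorder"
  assumes "strict_mono_on A f" "inj_on g A" "\<And>x. x \<in> A \<Longrightarrow> g x \<le> f x"
    and "y \<in> f ` A" "y \<in> g ` A"
  shows "the_inv_into A f y \<le> the_inv_into A g y"
proof (rule ccontr)
  define x where "x = the_inv_into A f y"
  define z where "z = the_inv_into A g y"
  have inj: "inj_on f A" using assms(1) by (rule strict_mono_on_imp_inj_on)
  have x: "x \<in> A" "f x = y"
    unfolding x_def using the_inv_into_into[OF inj] f_the_inv_into_f[OF inj] assms(4) by auto
  have z: "z \<in> A" "g z = y"
    unfolding z_def using the_inv_into_into f_the_inv_into_f assms(2,5) by fastforce+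
  assume "\<not> x \<le> z"
  then have "f z < f x" using assms(1) x z by (auto simp: strict_mono_on_def)
  with x z assms(3)[of z] show False by simp
qed

subsection \<open>Elementary inequalities\<close>

lemma ln_add_one_ge_div:
  fixes x :: real
  assumes "0 \<le> x"
  shows "2 * x / (2 + x) \<le> ln (1 + x)"
proof (rule DERIV_le_imp_le[OF assms, where f' = "\<lambda>t. 1 / (1 + t)" and g' = "\<lambda>t. 4 / (2 + t)^2"])
  fix t :: real assume t: "0 \<le> t"
  then show "((\<lambda>t. ln (1 + t)) has_real_derivative 1 / (1 + t)) (at t)"
    by (auto intro!: derivative_eq_intros)
  show "((\<lambda>t. 2 * t / (2 + t)) has_real_derivative 4 / (2 + t)^2) (at t)"
    using t by (auto intro!: derivative_eq_intros simp: field_simps power2_eq_square)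
next
  fix t :: real assume "0 < t"
  moreover have "4 * (1 + t) \<le> (2 + t)^2" by (simp add: power2_eq_square algebra_simps)
  ultimately show "4 / (2 + t)^2 \<le> 1 / (1 + t)" by (simp add: field_simps)
qed simp

lemma ln_add_one_le_arsinh:
  fixes x :: real
  assumes "0 \<le> x"
  shows "ln (1 + x) \<le> arsinh x"
  unfolding arsinh_real_def using assms arsinh_real_aux[of x] by (subst ln_le_cancel_iff) auto

lemma arsinh_half_le_ln_add_one:
  fixes x :: real
  assumes "0 \<le> x"
  shows "arsinh (x / 2) \<le> ln (1 + x)"
proof -
  have "sqrt ((x / 2)^2 + 1) \<le> sqrt ((1 + x / 2)^2)"
    using assms by (intro real_sqrt_le_mono) (simp add: power2_eq_square algebra_simps)
  then have "x / 2 + sqrt ((x / 2)^2 + 1) \<le> 1 + x" using assms by simp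
  then show ?thesis
    unfolding arsinh_real_def using arsinh_real_aux[of "x / 2"] by (subst ln_le_cancel_iff) auto
qed

lemma le_arsinh_mult_sqrt:
  fixes x :: real
  assumes "0 \<le> x"
  shows "x \<le> arsinh x * sqrt (x^2 + 1)"
proof (rule DERIV_le_imp_le[OF assms, where g' = "\<lambda>_. 1" and f' = "\<lambda>t. 1 + arsinh t * t / sqrt (t^2 + 1)"])
  fix t :: real
  have "0 < t^2 + 1" by (simp add: add_nonneg_pos)
  then show "((\<lambda>t. arsinh t * sqrt (t^2 + 1)) has_real_derivative 1 + arsinh t * t / sqrt (t^2 + 1)) (at t)"
    by (auto intro!: derivative_eq_intros simp: field_simps)
next
  fix t :: real assume "0 < t"
  then have "0 \<le> arsinh t * t / sqrt (t^2 + 1)"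
    by (intro divide_nonneg_nonneg mult_nonneg_nonneg) (auto intro: less_imp_le)
  then show "1 \<le> 1 + arsinh t * t / sqrt (t^2 + 1)" by simp
qed (auto intro: DERIV_ident)

subsection \<open>Derivatives and monotonicity\<close>

lemma h2_0 [simp]: "h2 0 = 0" and h4_0 [simp]: "h4 0 = 0" and h5_0 [simp]: "h5 0 = 0"
  by (simp_all add: h2_def h4_def h5_def)

lemma h5_eq: "h5 x = x * arsinh (x / 2) - 2 * (sqrt ((x / 2)^2 + 1) - 1)"
  by (simp add: h5_def cosh_arsinh_real)

lemma has_real_derivative_arsinh_half:
  "((\<lambda>x. arsinh (x / 2)) has_real_derivative 1 / (2 * sqrt ((x / 2)^2 + 1))) (at x)"
proof -
  have "((\<lambda>x. arsinh (x / 2)) has_real_derivative (1 / sqrt ((x / 2)^2 + 1)) * (1 / 2)) (at x)"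
    by (rule DERIV_chain2[where f = arsinh]) (auto intro!: derivative_eq_intros)
  then show ?thesis by (simp add: mult.commute)
qed

lemma h2_has_real_derivative: "-1 < x \<Longrightarrow> (h2 has_real_derivative ln (1 + x)) (at x)"
  unfolding h2_def[abs_def] by (auto intro!: derivative_eq_intros)

lemma h4_has_real_derivative:
  "(h4 has_real_derivative arsinh (x / 2) / 2 + (x / 4) / sqrt ((x / 2)^2 + 1)) (at x)"
  unfolding h4_def[abs_def]
  by (auto intro!: derivative_eq_intros has_real_derivative_arsinh_half simp: field_simps)

lemma h5_has_real_derivative: "(h5 has_real_derivative arsinh (x / 2)) (at x)"
  unfolding h5_eq[abs_def]
  by (auto intro!: derivative_eq_intros has_real_derivative_arsinh_half simp: field_simps)
    (use zero_le_power2[of x] in linarith)+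

lemma strict_mono_on_h2: "strict_mono_on {0..} h2"
  by (rule DERIV_pos_imp_strict_mono_on_atLeast[OF h2_has_real_derivative]) auto

lemma strict_mono_on_h4: "strict_mono_on {0..} h4"
  by (rule DERIV_pos_imp_strict_mono_on_atLeast[OF h4_has_real_derivative])
    (auto intro: add_pos_nonneg)

lemma strict_mono_on_h5: "strict_mono_on {0..} h5"
  by (rule DERIV_pos_imp_strict_mono_on_atLeast[OF h5_has_real_derivative]) simp

lemma continuous_on_h2: "continuous_on {0..} h2"
  by (rule DERIV_continuous_on[OF has_field_derivative_at_within[OF h2_has_real_derivative]]) auto

lemma continuous_on_h4: "continuous_on A h4"
  by (rule DERIV_continuous_on[OF has_field_derivative_at_within[OF h4_has_real_derivative]])

lemma continuous_on_h5: "continuous_on A h5"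
  by (rule DERIV_continuous_on[OF has_field_derivative_at_within[OF h5_has_real_derivative]])

lemma filterlim_h2_at_top: "filterlim h2 at_top at_top"
  unfolding h2_def[abs_def] by real_asymp

lemma filterlim_h4_at_top: "filterlim h4 at_top at_top"
  unfolding h4_def[abs_def] by real_asymp

lemma filterlim_h5_at_top: "filterlim h5 at_top at_top"
  unfolding h5_eq[abs_def] by real_asymp

lemma h2_image: "h2 ` {0..} = {0..}"
  using image_atLeast_eq_atLeast[OF strict_mono_on_imp_mono_on[OF strict_mono_on_h2]
      continuous_on_h2 filterlim_h2_at_top] by simp

lemma h4_image: "h4 ` {0..} = {0..}"
  using image_atLeast_eq_atLeast[OF strict_mono_on_imp_mono_on[OF strict_mono_on_h4]
      continuous_on_h4 filterlim_h4_at_top] by simp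

lemma h5_image: "h5 ` {0..} = {0..}"
  using image_atLeast_eq_atLeast[OF strict_mono_on_imp_mono_on[OF strict_mono_on_h5]
      continuous_on_h5 filterlim_h5_at_top] by simp

subsection \<open>Comparisons and lower bounds\<close>

lemma h5_le_h2:
  fixes x :: real
  assumes "0 \<le> x"
  shows "h5 x \<le> h2 x"
  by (rule DERIV_le_imp_le[OF assms, where f' = "\<lambda>t. ln (1 + t)" and g' = "\<lambda>t. arsinh (t / 2)"])
    (auto intro: h2_has_real_derivative h5_has_real_derivative arsinh_half_le_ln_add_one)

lemma h4_le_h5:
  fixes x :: real
  assumes "0 \<le> x"
  shows "h4 x \<le> h5 x"
proof (rule DERIV_le_imp_le[OF assms h5_has_real_derivative h4_has_real_derivative])
  fix t :: real assume "0 < t"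
  have "0 < sqrt ((t / 2)^2 + 1)" by (simp add: add_nonneg_pos)
  moreover have "t / 2 \<le> arsinh (t / 2) * sqrt ((t / 2)^2 + 1)"
    using le_arsinh_mult_sqrt[of "t / 2"] \<open>0 < t\<close> by simp
  ultimately have "(t / 4) / sqrt ((t / 2)^2 + 1) \<le> arsinh (t / 2) / 2"
    by (simp add: field_simps)
  then show "arsinh (t / 2) / 2 + (t / 4) / sqrt ((t / 2)^2 + 1) \<le> arsinh (t / 2)"
    by linarith
qed simp

lemma h2_ge_mult_ln:
  fixes x :: real
  assumes "0 \<le> x"
  shows "x / 2 * ln (1 + x) \<le> h2 x"
proof -
  have "2 * x \<le> ln (1 + x) * (2 + x)"
    using ln_add_one_ge_div[OF assms] assms by (simp add: divide_le_eq)
  then show ?thesis unfolding h2_def by (simp add: algebra_simps)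
qed

lemma h4_ge_mult_ln:
  fixes x :: real
  assumes "0 \<le> x"
  shows "x / 2 * ln (1 + x / 2) \<le> h4 x"
  unfolding h4_def using assms ln_add_one_le_arsinh[of "x / 2"] by (intro mult_left_mono) auto

lemma h2_ge_Bernstein:
  fixes x :: real
  assumes "0 \<le> x"
  shows "3 * x^2 / (6 + 2 * x) \<le> h2 x"
proof (rule DERIV_le_imp_le[OF assms h2_has_real_derivative, where g' = "\<lambda>t. 3 * t * (6 + t) / (2 * (3 + t)^2)"])
  fix t :: real assume t: "0 \<le> t"
  then show "((\<lambda>x. 3 * x^2 / (6 + 2 * x)) has_real_derivative 3 * t * (6 + t) / (2 * (3 + t)^2)) (at t)"
    by (auto intro!: derivative_eq_intros simp: divide_simps power2_eq_square)
      (simp_all add: algebra_simps)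
next
  fix t :: real assume t: "0 < t"
  have "2 * t * (2 * (3 + t)^2) - 3 * t * (6 + t) * (2 + t) = t^3"
    by (simp add: algebra_simps power2_eq_square power3_eq_cube)
  then have "3 * t * (6 + t) * (2 + t) \<le> 2 * t * (2 * (3 + t)^2)"
    using zero_le_power[of t 3] t by linarith
  then have "3 * t * (6 + t) / (2 * (3 + t)^2) \<le> 2 * t / (2 + t)"
    using t by (simp add: divide_le_eq le_divide_eq mult.commute mult.left_commute)
  then show "3 * t * (6 + t) / (2 * (3 + t)^2) \<le> ln (1 + t)"
    using ln_add_one_ge_div[of t] t by linarith
qed auto

lemma h4_ge_div:
  fixes x :: real
  assumes "0 \<le> x"
  shows "x^2 / (4 + 2 * x) \<le> h4 x"
proof -
  have "x / (2 + x) \<le> 2 * (x / 2) / (2 + x / 2)"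
    using assms by (simp add: field_simps)
  then have "x / (2 + x) \<le> ln (1 + x / 2)"
    using ln_add_one_ge_div[of "x / 2"] assms by linarith
  then have "x / 2 * (x / (2 + x)) \<le> x / 2 * ln (1 + x / 2)"
    using assms by (intro mult_left_mono) auto
  moreover have "x / 2 * (x / (2 + x)) = x^2 / (4 + 2 * x)"
    using assms by (simp add: field_simps power2_eq_square)
  ultimately show ?thesis using h4_ge_mult_ln[OF assms] by linarith
qed

subsection \<open>The functions \<open>\<psi>\<close>\<close>

lemma psi2_ge_ln_div:
  fixes x :: real
  assumes "0 < x"
  shows "ln (1 + x) / x \<le> psi2 x"
proof -
  have "ln (1 + x) / x = 2 * (x / 2 * ln (1 + x)) / x^2"
    using assms by (simp add: power2_eq_square)
  also have "\<dots> \<le> 2 * h2 x / x^2"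
    using h2_ge_mult_ln[of x] assms by (intro divide_right_mono mult_left_mono) auto
  finally show ?thesis unfolding psi2_def .
qed

lemma psi2_ge_Bernstein:
  fixes x :: real
  assumes "0 < x"
  shows "1 / (1 + x / 3) \<le> psi2 x"
proof -
  have "1 / (1 + x / 3) = 6 / (6 + 2 * x)"
    using assms by (simp add: field_simps)
  also have "\<dots> = 2 * (3 * x^2 / (6 + 2 * x)) / x^2"
    using assms by (simp add: power2_eq_square)
  also have "\<dots> \<le> 2 * h2 x / x^2"
    using h2_ge_Bernstein[of x] assms by (intro divide_right_mono mult_left_mono) auto
  finally show ?thesis unfolding psi2_def .
qed

lemma psi4_ge_ln_div:
  fixes x :: real
  assumes "0 < x"
  shows "2 * ln (1 + x / 2) / x \<le> psi4 x"
proof -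
  have "2 * ln (1 + x / 2) / x = 4 * (x / 2 * ln (1 + x / 2)) / x^2"
    using assms by (simp add: power2_eq_square)
  also have "\<dots> \<le> 4 * h4 x / x^2"
    using h4_ge_mult_ln[of x] assms by (intro divide_right_mono mult_left_mono) auto
  finally show ?thesis unfolding psi4_def .
qed

lemma psi4_ge_inverse:
  fixes x :: real
  assumes "0 < x"
  shows "1 / (1 + x / 2) \<le> psi4 x"
proof -
  have "1 / (1 + x / 2) = 4 / (4 + 2 * x)"
    using assms by (simp add: field_simps)
  also have "\<dots> = 4 * (x^2 / (4 + 2 * x)) / x^2"
    using assms by (simp add: power2_eq_square)
  also have "\<dots> \<le> 4 * h4 x / x^2"
    using h4_ge_div[of x] assms by (intro divide_right_mono mult_left_mono) auto
  finally show ?thesis unfolding psi4_def .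
qed

lemma psi4_le_psi5:
  fixes x :: real
  assumes "0 \<le> x"
  shows "psi4 x \<le> psi5 x"
  unfolding psi4_def psi5_def using h4_le_h5[OF assms] by (intro divide_right_mono) auto

subsection \<open>Asymptotics\<close>

lemma arsinh_half_eq: "arsinh (x / 2) = ln (x / 2 + sqrt (x^2 / 4 + 1))"
  by (simp add: arsinh_real_def power_divide)

lemma h_asymp_equiv_at_right_0:
  shows "h2 \<sim>[at_right 0] (\<lambda>x. x^2 / 2)"
    and "h4 \<sim>[at_right 0] (\<lambda>x. x^2 / 4)"
    and "h5 \<sim>[at_right 0] (\<lambda>x. x^2 / 4)"
    and "(\<lambda>x. h2 x - h4 x) \<sim>[at_right 0] (\<lambda>x. x^2 / 4)"
    and "(\<lambda>x. h2 x - h5 x) \<sim>[at_right 0] (\<lambda>x. x^2 / 4)"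
  unfolding h2_def[abs_def] h4_def[abs_def] h5_eq[abs_def] arsinh_half_eq power_divide
  by real_asymp+

lemma h_asymp_equiv_at_top:
  shows "h2 \<sim>[at_top] (\<lambda>x. x * ln x)"
    and "h4 \<sim>[at_top] (\<lambda>x. (1/2) * x * ln x)"
    and "h5 \<sim>[at_top] (\<lambda>x. x * ln x)"
    and "(\<lambda>x. h2 x - h4 x) \<sim>[at_top] (\<lambda>x. (1/2) * x * ln x)"
    and "(\<lambda>x. h2 x - h5 x) \<sim>[at_top] (\<lambda>x. ln x)"
  unfolding h2_def[abs_def] h4_def[abs_def] h5_eq[abs_def] by real_asymp+

theorem lemma11:
  shows "((\<forall>x::real. x \<ge> 0 \<longrightarrow> h2 x \<ge> h5 x \<and> h5 x \<ge> h4 x)) \<and>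
    ((\<forall>y::real. y \<ge> 0 \<longrightarrow> h2inv y \<le> h5inv y \<and> h5inv y \<le> h4inv y)) \<and>
    ((\<forall>x::real. x \<ge> 0 \<longrightarrow> h2 x \<ge> (x/2) * ln (1 + x) \<and> (x/2) * ln (1 + x) \<ge> (x/2) * ln (1 + x/2))) \<and>
    ((\<forall>x::real. x \<ge> 0 \<longrightarrow> h4 x \<ge> (x/2) * ln (1 + x/2))) \<and>
    ((\<forall>x::real. x \<ge> 0 \<longrightarrow> h5 x \<ge> (x/2) * ln (1 + x/2))) \<and>
    (h2 \<sim>[at_right 0] (\<lambda>x. x^2 / 2)) \<and>
    (h2 \<sim>[at_top] (\<lambda>x. x * ln x)) \<and>
    (h4 \<sim>[at_right 0] (\<lambda>x. x^2 / 4)) \<and>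
    (h4 \<sim>[at_top] (\<lambda>x. (1/2) * x * ln x)) \<and>
    (h5 \<sim>[at_right 0] (\<lambda>x. x^2 / 4)) \<and>
    (h5 \<sim>[at_top] (\<lambda>x. x * ln x)) \<and>
    ((\<lambda>x. h2 x - h4 x) \<sim>[at_right 0] (\<lambda>x. x^2 / 4)) \<and>
    ((\<lambda>x. h2 x - h4 x) \<sim>[at_top] (\<lambda>x. (1/2) * x * ln x)) \<and>
    ((\<lambda>x. h2 x - h5 x) \<sim>[at_right 0] (\<lambda>x. x^2 / 4)) \<and>
    ((\<lambda>x. h2 x - h5 x) \<sim>[at_top] (\<lambda>x. ln x)) \<and>
    ((\<forall>x::real. x > 0 \<longrightarrow> psi2 x \<ge> ln (1 + x) / x \<and> psi2 x \<ge> 1 / (1 + x/3))) \<and>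
    ((\<forall>x::real. x > 0 \<longrightarrow> psi4 x \<ge> 2 * ln (1 + x/2) / x \<and> psi4 x \<ge> (1/2) / (1 + x/2))) \<and>
    ((\<forall>\<delta>::real. 0 < \<delta> \<and> \<delta> < 1/2 \<longrightarrow>
        (\<forall>x::real. 0 < x \<and> x \<le> 2 * sqrt \<delta> / sqrt (1/2 - \<delta>) \<longrightarrow>
            psi4 x \<ge> (1 - \<delta>) / (1 + x/2)))) \<and>
    ((\<forall>x::real. x > 0 \<longrightarrow> psi5 x \<ge> 2 * ln (1 + x/2) / x \<and> psi5 x \<ge> 1 / (1 + x/2)))"
proof -
  have inverse_le: "the_inv_into {0..} f y \<le> the_inv_into {0..} g y"
    if "strict_mono_on {0..} f" "strict_mono_on {0..} g" "f ` {0..} = {0..}" "g ` {0..} = {0..}"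
      "\<And>x. 0 \<le> x \<Longrightarrow> g x \<le> f x" "0 \<le> y" for f g :: "real \<Rightarrow> real" and y
    using that by (intro the_inv_into_le_the_inv_into strict_mono_on_imp_inj_on) auto
  have ln_mono: "x / 2 * ln (1 + x / 2) \<le> x / 2 * ln (1 + x)" if "0 \<le> x" for x :: real
    using that by (intro mult_left_mono) auto
  have psi4_ge: "c / (1 + x / 2) \<le> psi4 x" if "c \<le> 1" "0 < x" for c x :: real
    using order_trans[OF divide_right_mono[OF that(1)] psi4_ge_inverse[OF that(2)]] that by simp
  have comparison: "\<forall>x::real. x \<ge> 0 \<longrightarrow> h2 x \<ge> h5 x \<and> h5 x \<ge> h4 x"
    using h5_le_h2 h4_le_h5 by blast
  have inverses: "\<forall>y::real. y \<ge> 0 \<longrightarrow> h2inv y \<le> h5inv y \<and> h5inv y \<le> h4inv y"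
    unfolding h2inv_def h4inv_def h5inv_def
    using inverse_le[OF strict_mono_on_h2 strict_mono_on_h5 h2_image h5_image h5_le_h2]
      inverse_le[OF strict_mono_on_h5 strict_mono_on_h4 h5_image h4_image h4_le_h5] by blast
  have ln_bound_h2: "\<forall>x::real. x \<ge> 0 \<longrightarrow> h2 x \<ge> (x/2) * ln (1 + x) \<and> (x/2) * ln (1 + x) \<ge> (x/2) * ln (1 + x/2)"
    using h2_ge_mult_ln ln_mono by blast
  have ln_bound_h5: "\<forall>x::real. x \<ge> 0 \<longrightarrow> h5 x \<ge> (x/2) * ln (1 + x/2)"
    using h4_ge_mult_ln h4_le_h5 order_trans by blast
  have psi5_bounds: "2 * ln (1 + x/2) / x \<le> psi5 x \<and> 1 / (1 + x/2) \<le> psi5 x" if "0 < x" for x :: real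
    using psi4_ge_ln_div[OF that] psi4_ge_inverse[OF that] psi4_le_psi5[of x] that by auto
  show ?thesis
    using h4_ge_mult_ln psi2_ge_ln_div psi2_ge_Bernstein psi4_ge_ln_div psi4_ge[of "1/2"] psi4_ge psi5_bounds
    by (intro conjI comparison inverses ln_bound_h2 ln_bound_h5
        h_asymp_equiv_at_right_0 h_asymp_equiv_at_top) auto
qed

end
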